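(* Let $m = p + 12k$ with $k \geq 0$ an integer and $p \in \{11,13,17,19\}$. Suppose $(X, Y, P_0, Q_0)$ is a type-1 basic set of dipaths of $G_{2m}$. For $j \in \{1,\dots,k-1\}$ let $P_j = \rho^{12j}(P_0)$ and $Q_j = \rho^{12j}(Q_0)$. Then $C^0 = X P_0 P_1 \cdots P_{k-1}$ and $C^1 = Y Q_0 Q_1 \cdots Q_{k-1}$ are type-1 directed $m$-cycles of $G_{2m}$, and $C^0 \cup C^1$ is a $\vec{C}_m$-factor of $G_{2m}$.
   Context: Let $m$ be odd. $G_{2m} = \vec{X}(m,\{1,3\}) \wr K^*_2$ is the digraph with vertex set $\{x_a, y_a : a \in \mathbb{Z}_m\}$ whose arcs are: $(u_a, v_b)$ for all $u,v \in \{x,y\}$ and $a,b$ with $b-a \equiv 1$ or $3 \pmod m$, together with $(x_a,y_a)$ and $(y_a,x_a)$ for all $a$. An arc from a vertex with subscript $a$ to one with subscript $b$ has difference equal to the representative of $b-a$ in $\{0,1,\dots,m-1\}$. A type-$k$ cycle is a directed $m$-cycle whose arc differences sum (as integers) to $km$. The map $\rho$ sends $x_i \mapsto x_{i+1}$, $y_i \mapsto y_{i+1}$ (subscripts mod $m$), applied vertexwise to dipaths. For a dipath $P$: $s(P)$ is its first vertex, $t(P)$ its last vertex, $\mathrm{len}(P)$ its number of arcs (a dipath of length $0$ is a single vertex); $PQ$ denotes concatenation when $t(P)=s(Q)$. With $m = p+12k$, set $V_0 = \{x_j, y_j : 0 \le j \le p-1\}$ and, for $1 \le i \le k$, $V_i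 = \{x_j, y_j : p+12(i-1) \le j \le p+12i-1\}$. A 4-tuple $(X,Y,R,S)$ of dipaths (or, when $k=0$, closed dipaths) of $G_{2m}$ is a type-1 basic set of dipaths if: (C1) $R$ and $S$ are vertex-disjoint; if $k\ge1$ then $X$ and $Y$ are vertex-disjoint dipaths, while if $k=0$ they are vertex-disjoint type-1 directed cycles; (C2) $s(X)=\rho^{-p}(t(X))$ and $s(Y)=\rho^{-p}(t(Y))$; (C3) $\mathrm{len}(X)=\mathrm{len}(Y)=p$; $\mathrm{len}(R)=\mathrm{len}(S)=12$ if $k\ge1$ and $\mathrm{len}(R)=\mathrm{len}(S)=0$ if $k=0$; (C4) each of $X,Y$ has its source and internal vertices in $V_0$ and its terminal vertex equal to $x_t$ or $y_t$ for some $t\in\{p,p+1,p+2\}$; (C5) $t(X)=s(R)$ and $t(Y)=s(S)$; (C6) if $k\ge1$ and $P\in\{R,S\}$ has $s(P)=x_t$ (resp. $y_t$), then $t(P)=x_{t+12}$ (resp. $y_{t+12}$), and all internal vertices of $P$ lie in $V_1$. A $\vec{C}_m$-factor is a spanning subdigraph that is a disjoint union of directed $m$-cycles. *)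

theory Defs
  imports Main
begin

text \<open>Vertices of G_{2m}: (True, a) is x_a, (False, a) is y_a, with a an integer
  representative in {0..m-1}.  Dipaths are nonempty vertex lists.\<close>

type_synonym vtx = "bool \<times> int"

definition verts :: "int \<Rightarrow> vtx set" where
  "verts m = {v. 0 \<le> snd v \<and> snd v < m}"

definition adiff :: "int \<Rightarrow> vtx \<Rightarrow> vtx \<Rightarrow> int" where
  "adiff m u v = (snd v - snd u) mod m"

definition arc :: "int \<Rightarrow> vtx \<Rightarrow> vtx \<Rightarrow> bool" where
  "arc m u v \<longleftrightarrow> u \<in> verts m \<and> v \<in> verts m \<and>
     ((snd v - snd u) mod m \<in> {1, 3} \<or> (snd u = snd v \<and> fst u \<noteq> fst v))"

definition arcs_ok :: "int \<Rightarrow> vtx list \<Rightarrow> bool" where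
  "arcs_ok m P \<longleftrightarrow> (\<forall>i. Suc i < length P \<longrightarrow> arc m (P ! i) (P ! Suc i))"

definition dipath :: "int \<Rightarrow> vtx list \<Rightarrow> bool" where
  "dipath m P \<longleftrightarrow> P \<noteq> [] \<and> set P \<subseteq> verts m \<and> distinct P \<and> arcs_ok m P"

definition len :: "vtx list \<Rightarrow> nat" where
  "len P = length P - 1"

definition dcycle :: "int \<Rightarrow> vtx list \<Rightarrow> bool" where
  "dcycle m C \<longleftrightarrow> int (length C) = m + 1 \<and> hd C = last C \<and> set C \<subseteq> verts m
     \<and> distinct (tl C) \<and> arcs_ok m C"

definition diff_sum :: "int \<Rightarrow> vtx list \<Rightarrow> int" where
  "diff_sum m C = (\<Sum>i<length C - 1. adiff m (C ! i) (C ! Suc i))"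

definition type_cycle :: "int \<Rightarrow> int \<Rightarrow> vtx list \<Rightarrow> bool" where
  "type_cycle m t C \<longleftrightarrow> dcycle m C \<and> diff_sum m C = t * m"

definition rho_pow :: "int \<Rightarrow> int \<Rightarrow> vtx list \<Rightarrow> vtx list" where
  "rho_pow m n P = map (\<lambda>(b, i). (b, (i + n) mod m)) P"

definition rhov :: "int \<Rightarrow> int \<Rightarrow> vtx \<Rightarrow> vtx" where
  "rhov m n v = (fst v, (snd v + n) mod m)"

text \<open>concatenation PQ (for t(P) = s(Q))\<close>
definition cat :: "vtx list \<Rightarrow> vtx list \<Rightarrow> vtx list" where
  "cat P Q = P @ tl Q"

definition Vblock :: "int \<Rightarrow> int \<Rightarrow> nat \<Rightarrow> vtx set" where
  "Vblock m p i = (if i = 0 then {v. 0 \<le> snd v \<and> snd v \<le> p - 1}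
      else {v. p + 12 * (int i - 1) \<le> snd v \<and> snd v \<le> p + 12 * int i - 1})"

definition type1_basic_set :: "int \<Rightarrow> int \<Rightarrow> nat \<Rightarrow> vtx list \<Rightarrow> vtx list \<Rightarrow> vtx list \<Rightarrow> vtx list \<Rightarrow> bool" where
  "type1_basic_set m p k X Y R S \<longleftrightarrow>
     \<comment> \<open>C1 (together with the requirement that all four are (closed) dipaths)\<close>
     dipath m R \<and> dipath m S \<and> set R \<inter> set S = {} \<and>
     (k \<ge> 1 \<longrightarrow> dipath m X \<and> dipath m Y \<and> set X \<inter> set Y = {}) \<and>
     (k = 0 \<longrightarrow> type_cycle m 1 X \<and> type_cycle m 1 Y \<and> set X \<inter> set Y = {}) \<and>
     \<comment> \<open>C2\<close>
     X \<noteq> [] \<and> Y \<noteq> [] \<and>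
     hd X = rhov m (- p) (last X) \<and> hd Y = rhov m (- p) (last Y) \<and>
     \<comment> \<open>C3\<close>
     int (len X) = p \<and> int (len Y) = p \<and>
     (k \<ge> 1 \<longrightarrow> len R = 12 \<and> len S = 12) \<and>
     (k = 0 \<longrightarrow> len R = 0 \<and> len S = 0) \<and>
     \<comment> \<open>C4\<close>
     (\<forall>P \<in> {X, Y}. set (butlast P) \<subseteq> Vblock m p 0 \<and>
        snd (last P) \<in> {p mod m, (p + 1) mod m, (p + 2) mod m}) \<and>
     \<comment> \<open>C5\<close>
     last X = hd R \<and> last Y = hd S \<and>
     \<comment> \<open>C6\<close>
     (k \<ge> 1 \<longrightarrow> (\<forall>P \<in> {R, S}. last P = rhov m 12 (hd P) \<and>
        set (butlast (tl P)) \<subseteq> Vblock m p 1))"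

definition Cm_factor :: "int \<Rightarrow> vtx list list \<Rightarrow> bool" where
  "Cm_factor m Cs \<longleftrightarrow> (\<forall>C \<in> set Cs. dcycle m C) \<and>
     (\<forall>i j. i < length Cs \<and> j < length Cs \<and> i \<noteq> j \<longrightarrow> set (Cs ! i) \<inter> set (Cs ! j) = {}) \<and>
     (\<Union>C \<in> set Cs. set C) = verts m"

end

theory Submission
  imports Defs
begin

text \<open>The cycle \<open>C\<^sup>0\<close> is listed vertex by vertex: position \<open>i < p\<close> carries \<open>X ! i\<close> and
  position \<open>p + 12j + r\<close> carries \<open>\<rho>\<^sup>1\<^sup>2\<^sup>j(P\<^sub>0 ! r)\<close>; at position \<open>m\<close> this returns to
  \<open>s(X)\<close> because \<open>\<rho>\<^sup>1\<^sup>2\<^sup>k = \<rho>\<^sup>-\<^sup>p\<close>.  The subscripts of \<open>X\<close> lie in \<open>V\<^sub>0\<close> and those of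
  \<open>\<rho>\<^sup>1\<^sup>2\<^sup>j(P\<^sub>0)\<close> in \<open>V\<^sub>j\<^sub>+\<^sub>1\<close>, so the listing is injective and the subscript decreases
  only on the closing arc, which wraps around once; hence the arc differences sum to \<open>m\<close>.
  A vertex of \<open>C\<^sup>0\<close> with subscript below \<open>p\<close> lies on \<open>X\<close>, any other is mapped into \<open>P\<^sub>0\<close> by
  a power of \<open>\<rho>\<^sup>-\<^sup>1\<^sup>2\<close>; so \<open>C\<^sup>0\<close> and \<open>C\<^sup>1\<close> are disjoint, and two disjoint \<open>m\<close>-cycles cover
  all \<open>2m\<close> vertices.\<close>

abbreviation rho_chain :: "int \<Rightarrow> nat \<Rightarrow> vtx list \<Rightarrow> vtx list \<Rightarrow> vtx list" where
  "rho_chain m k X P \<equiv> foldl cat X (map (\<lambda>j. rho_pow m (12 * int j) P) [0..<k])"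

text \<open>On the block \<open>V\<^sub>j\<^sub>+\<^sub>1\<close> (\<open>j \<ge> 0\<close>) this is \<open>\<rho>\<^sup>-\<^sup>1\<^sup>2\<^sup>j\<close>, landing in \<open>V\<^sub>1\<close>.\<close>
definition to_block1 :: "int \<Rightarrow> vtx \<Rightarrow> vtx" where
  "to_block1 p v = (fst v, p + (snd v - p) mod 12)"

lemma foldl_cat: "foldl cat A Qs = A @ concat (map tl Qs)"
  by (induction Qs arbitrary: A) (auto simp: cat_def)

lemma length_rho_pow [simp]: "length (rho_pow m a P) = length P"
  by (simp add: rho_pow_def)

lemma nth_rho_pow: "r < length P \<Longrightarrow> rho_pow m a P ! r = rhov m a (P ! r)"
  by (cases "P ! r") (simp add: rho_pow_def rhov_def)

lemma rhov_in_verts: "m > 0 \<Longrightarrow> rhov m a v \<in> verts m"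
  by (simp add: rhov_def verts_def)

lemma rhov_rhov: "rhov m a (rhov m b v) = rhov m (a + b) v"
  by (simp add: rhov_def mod_add_right_eq add.commute add.left_commute)

lemma rhov_zero: "v \<in> verts m \<Longrightarrow> rhov m 0 v = v"
  by (cases v) (simp add: rhov_def verts_def)

lemma rhov_cong: "a mod m = b mod m \<Longrightarrow> rhov m a v = rhov m b v"
  unfolding rhov_def by (metis mod_add_right_eq)

lemma arc_rhov: assumes "arc m u v" shows "arc m (rhov m a u) (rhov m a v)"
proof -
  have "m > 0" using assms by (auto simp: arc_def verts_def)
  moreover have "((snd v + a) mod m - (snd u + a) mod m) mod m = (snd v - snd u) mod m"
    by (simp add: mod_diff_eq)
  ultimately show ?thesis using assms unfolding arc_def by (auto simp: rhov_def verts_def)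
qed

lemma adiff_eq:
  assumes "u \<in> verts m" "v \<in> verts m"
  shows "adiff m u v = snd v - snd u + (if snd v < snd u then m else 0)"
proof -
  have "0 \<le> snd v - snd u + (if snd v < snd u then m else 0)"
    "snd v - snd u + (if snd v < snd u then m else 0) < m"
    using assms by (auto simp: verts_def)
  then have "(snd v - snd u + (if snd v < snd u then m else 0)) mod m
      = snd v - snd u + (if snd v < snd u then m else 0)"
    by (rule mod_pos_pos_trivial)
  then show ?thesis by (simp add: adiff_def split: if_splits)
qed

lemma arc_descent_wraps:
  assumes "arc m u v" "snd v < snd u" shows "m - 3 \<le> snd u - snd v"
proof -
  have "adiff m u v \<in> {1, 3}" using assms by (auto simp: arc_def adiff_def)
  moreover have "adiff m u v = snd v - snd u + m"
    using assms adiff_eq[of u m v] by (simp add: arc_def)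
  ultimately show ?thesis by auto
qed

lemma diff_sum_closed_walk:
  assumes "set C \<subseteq> verts m" "C \<noteq> []" "hd C = last C"
  shows "diff_sum m C = m * int (card {i. Suc i < length C \<and> snd (C ! Suc i) < snd (C ! i)})"
proof -
  define D where "D = {i. Suc i < length C \<and> snd (C ! Suc i) < snd (C ! i)}"
  let ?l = "length C - 1"
  have D: "D = {i \<in> {..<?l}. snd (C ! Suc i) < snd (C ! i)}"
    by (auto simp: D_def)
  have "diff_sum m C = (\<Sum>i<?l. (snd (C ! Suc i) - snd (C ! i)) + (if i \<in> D then m else 0))"
    unfolding diff_sum_def
  proof (intro sum.cong refl)
    fix i assume "i \<in> {..<?l}"
    then have "C ! i \<in> verts m" "C ! Suc i \<in> verts m" using assms(1) by auto
    then show "adiff m (C ! i) (C ! Suc i) = snd (C ! Suc i) - snd (C ! i) + (if i \<in> D then m else 0)"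
      using \<open>i \<in> {..<?l}\<close> by (simp add: adiff_eq D)
  qed
  also have "\<dots> = (snd (C ! ?l) - snd (C ! 0)) + m * int (card D)"
    using sum_lessThan_telescope[of "\<lambda>i. snd (C ! i)" ?l] D
    by (simp add: sum.distrib sum.If_cases Int_def)
  also have "snd (C ! ?l) = snd (C ! 0)"
    using assms(2,3) by (simp add: hd_conv_nth last_conv_nth)
  finally show ?thesis by (simp add: D_def)
qed

lemma dcycle_map_upt:
  assumes "int M = m" "f 0 = f M" "inj_on f {1..M}" "\<And>i. i \<le> M \<Longrightarrow> f i \<in> verts m"
    and "\<And>i. i < M \<Longrightarrow> arc m (f i) (f (Suc i))"
  shows "dcycle m (map f [0..<M + 1])"
proof -
  have "tl (map f [0..<M + 1]) = map f [1..<M + 1]"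
    by (metis map_tl tl_upt One_nat_def)
  moreover have "set [1..<M + 1] = {1..M}" by auto
  ultimately have "distinct (tl (map f [0..<M + 1]))"
    using assms(3) by (simp add: distinct_map)
  moreover have "hd (map f [0..<M + 1]) = last (map f [0..<M + 1])"
    using assms(2) by (simp add: hd_map last_map del: upt_Suc)
  ultimately show ?thesis using assms(1,4,5)
    by (auto simp: dcycle_def arcs_ok_def simp del: upt_Suc)
qed

lemma type1_map_upt:
  assumes "dcycle m (map f [0..<M + 1])" "0 < M"
    and "\<And>i. i < M \<Longrightarrow> snd (f (Suc i)) < snd (f i) \<longleftrightarrow> Suc i = M"
  shows "type_cycle m 1 (map f [0..<M + 1])"
proof -
  have "snd (f M) < snd (f (M - 1))" using assms(2) assms(3)[of "M - 1"] by simp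
  then have "{i. Suc i < length (map f [0..<M + 1])
      \<and> snd (map f [0..<M + 1] ! Suc i) < snd (map f [0..<M + 1] ! i)} = {M - 1}"
    using assms(2,3) by (auto simp del: upt_Suc)
  then show ?thesis using assms(1) diff_sum_closed_walk[of "map f [0..<M + 1]" m]
    by (simp add: type_cycle_def dcycle_def del: upt_Suc)
qed

lemma card_verts: "m > 0 \<Longrightarrow> card (verts m) = 2 * nat m"
proof -
  have "verts m = UNIV \<times> {0..<m}" by (auto simp: verts_def)
  then show ?thesis by (simp add: card_cartesian_product)
qed

lemma card_set_dcycle:
  assumes "dcycle m C" "0 < m" shows "card (set C) = nat m"
proof -
  obtain a as where C: "C = a # as" and "as \<noteq> []"
    using assms by (cases C) (auto simp: dcycle_def)
  then have "a \<in> set as" using assms by (auto simp: dcycle_def)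
  then have "set C = set as" using C by auto
  then show ?thesis using assms C by (auto simp: dcycle_def distinct_card)
qed

lemma Cm_factor_pair:
  assumes "dcycle m A" "dcycle m B" "set A \<inter> set B = {}" "m > 0"
  shows "Cm_factor m [A, B]"
proof -
  have sub: "set A \<union> set B \<subseteq> verts m" using assms by (auto simp: dcycle_def)
  have "finite (verts m)"
    by (rule finite_subset[of _ "UNIV \<times> {0..<m}"]) (auto simp: verts_def)
  moreover have "card (set A \<union> set B) = card (verts m)"
    using assms card_set_dcycle[OF assms(1,4)] card_set_dcycle[OF assms(2,4)] card_verts[OF assms(4)]
    by (simp add: card_Un_disjoint)
  ultimately have "set A \<union> set B = verts m"
    using card_subset_eq[OF _ sub] by blast
  moreover have "set ([A, B] ! i) \<inter> set ([A, B] ! j) = {}" if "i < 2" "j < 2" "i \<noteq> j" for i j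
    using that assms(3) by (auto simp: less_2_cases_iff)
  ultimately show ?thesis using assms unfolding Cm_factor_def by auto
qed

text \<open>One half \<open>(X, P\<^sub>0)\<close> of a type-1 basic set with \<open>k \<ge> 1\<close>; here \<open>n\<close> is \<open>p\<close> as a natural number.\<close>
locale basic_chain =
  fixes m :: int and n k :: nat and X P :: "vtx list"
  assumes k_pos: "1 \<le> k" and n_ge: "3 \<le> n" and m_eq: "m = int n + 12 * int k"
    and X_dipath: "dipath m X" and length_X: "length X = n + 1"
    and X_low: "\<And>i. i < n \<Longrightarrow> snd (X ! i) < int n"
    and X_closes: "hd X = rhov m (- int n) (last X)"
    and X_P: "last X = hd P"
    and P_dipath: "dipath m P" and length_P: "length P = 13"
    and P_shift: "last P = rhov m 12 (hd P)"
    and P_block: "\<And>r. r \<le> 11 \<Longrightarrow> int n \<le> snd (P ! r) \<and> snd (P ! r) \<le> int n + 11"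
begin

definition M :: nat where "M = n + 12 * k"

definition vertex :: "nat \<Rightarrow> vtx" where
  "vertex i = (if i < n then X ! i
     else rhov m (12 * int ((i - n) div 12)) (P ! ((i - n) mod 12)))"

lemma int_M: "int M = m"
  by (simp add: M_def m_eq)

lemma n_less_M: "n < M"
  using k_pos by (simp add: M_def)

lemma m_pos: "0 < m"
  using n_ge m_eq by simp

lemma X_nth_verts: "i \<le> n \<Longrightarrow> X ! i \<in> verts m"
  using X_dipath length_X by (auto simp: dipath_def)

lemma P_nth_verts: "r < 13 \<Longrightarrow> P ! r \<in> verts m"
  using P_dipath length_P by (auto simp: dipath_def)

lemma vertex_in_verts: "vertex i \<in> verts m"
  using X_nth_verts rhov_in_verts[OF m_pos] by (simp add: vertex_def)

lemma vertex_n: "vertex n = X ! n"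
proof -
  have "vertex n = P ! 0"
    using rhov_zero[OF P_nth_verts] by (simp add: vertex_def)
  also have "\<dots> = X ! n"
    using X_P length_X length_P by (simp add: hd_conv_nth last_conv_nth flip: length_0_conv)
  finally show ?thesis .
qed

lemma vertex_M: "vertex M = X ! 0"
proof -
  have "vertex M = rhov m (12 * int k) (P ! 0)"
    using n_less_M by (simp add: vertex_def M_def)
  also have "\<dots> = rhov m (- int n) (P ! 0)"
    by (rule rhov_cong) (use mod_add_self2[of "- int n" m] m_eq in simp)
  also have "\<dots> = X ! 0"
    using X_closes X_P length_X length_P by (simp add: hd_conv_nth flip: length_0_conv)
  finally show ?thesis .
qed

lemma vertex_Suc_high:
  assumes "n \<le> i"
  shows "vertex (Suc i) = rhov m (12 * int ((i - n) div 12)) (P ! Suc ((i - n) mod 12))"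
proof (cases "(i - n) mod 12 = 11")
  case True
  then have "Suc (i - n) div 12 = Suc ((i - n) div 12)" "Suc (i - n) mod 12 = 0"
    by (simp_all add: div_Suc mod_Suc)
  then have "vertex (Suc i) = rhov m (12 * int ((i - n) div 12)) (rhov m 12 (P ! 0))"
    using assms by (simp add: vertex_def Suc_diff_le rhov_rhov algebra_simps)
  also have "rhov m 12 (P ! 0) = P ! 12"
    using P_shift length_P by (simp add: hd_conv_nth last_conv_nth flip: length_0_conv)
  finally show ?thesis using True by simp
next
  case False
  then have "Suc (i - n) div 12 = (i - n) div 12" "Suc (i - n) mod 12 = Suc ((i - n) mod 12)"
    using mod_less_divisor[of 12 "i - n"] by (simp_all add: div_Suc mod_Suc)
  then show ?thesis using assms by (simp add: vertex_def Suc_diff_le)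
qed

lemma vertex_arc: "i < M \<Longrightarrow> arc m (vertex i) (vertex (Suc i))"
proof (cases "i < n")
  case True
  then have "arc m (X ! i) (X ! Suc i)"
    using X_dipath length_X by (auto simp: dipath_def arcs_ok_def)
  moreover have "vertex (Suc i) = X ! Suc i"
    using True vertex_n by (cases "Suc i = n") (simp_all add: vertex_def)
  ultimately show ?thesis using True by (simp add: vertex_def)
next
  case False
  then have "arc m (P ! ((i - n) mod 12)) (P ! Suc ((i - n) mod 12))"
    using P_dipath length_P by (auto simp: dipath_def arcs_ok_def)
  then show ?thesis
    using arc_rhov False vertex_Suc_high[of i] by (simp add: vertex_def)
qed

lemma vertex_high:
  assumes "n \<le> i" "i < M"
  shows "vertex i = (fst (P ! ((i - n) mod 12)), snd (P ! ((i - n) mod 12)) + 12 * int ((i - n) div 12))"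
    and "int n + 12 * int ((i - n) div 12) \<le> snd (vertex i)"
    and "snd (vertex i) \<le> int n + 12 * int ((i - n) div 12) + 11"
proof -
  let ?r = "(i - n) mod 12" and ?j = "(i - n) div 12"
  have "i - n = 12 * ?j + ?r" by simp
  then have "?j < k" using assms by (simp add: M_def)
  moreover have "int n \<le> snd (P ! ?r)" "snd (P ! ?r) \<le> int n + 11"
    using P_block[of ?r] by simp_all
  ultimately have "0 \<le> snd (P ! ?r) + 12 * int ?j" "snd (P ! ?r) + 12 * int ?j < m"
    using m_eq by linarith+
  then show eq: "vertex i = (fst (P ! ?r), snd (P ! ?r) + 12 * int ?j)"
    using assms by (simp add: vertex_def rhov_def)
  show "int n + 12 * int ?j \<le> snd (vertex i)" "snd (vertex i) \<le> int n + 12 * int ?j + 11"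
    using eq \<open>int n \<le> snd (P ! ?r)\<close> \<open>snd (P ! ?r) \<le> int n + 11\<close> by simp_all
qed

lemma vertex_high_decode:
  assumes "n \<le> i" "i < M"
  shows "(snd (vertex i) - int n) div 12 = int ((i - n) div 12)"
    and "to_block1 (int n) (vertex i) = P ! ((i - n) mod 12)"
proof -
  let ?r = "(i - n) mod 12" and ?j = "(i - n) div 12"
  have s: "snd (vertex i) - int n = (snd (P ! ?r) - int n) + 12 * int ?j"
    using vertex_high(1)[OF assms] by simp
  have "?r \<le> 11" by simp
  then have "0 \<le> snd (P ! ?r) - int n" "snd (P ! ?r) - int n < 12"
    using P_block by force+
  then have "(snd (vertex i) - int n) div 12 = int ?j \<and>
      (snd (vertex i) - int n) mod 12 = snd (P ! ?r) - int n"
    unfolding s by (simp add: div_pos_pos_trivial mod_pos_pos_trivial)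
  then show "(snd (vertex i) - int n) div 12 = int ?j" "to_block1 (int n) (vertex i) = P ! ?r"
    using vertex_high(1)[OF assms] by (simp_all add: to_block1_def prod_eq_iff)
qed

lemma snd_vertex_less_iff:
  assumes "i \<le> M" shows "snd (vertex i) < int n \<longleftrightarrow> i < n \<or> i = M"
proof (cases "i < n \<or> i = M")
  case True
  then show ?thesis using X_low[of i] X_low[of 0] vertex_M n_ge by (auto simp: vertex_def)
next
  case False
  then show ?thesis using assms vertex_high(2)[of i] by simp
qed

lemma vertex_low:
  assumes "i \<le> M" "snd (vertex i) < int n"
  shows "i mod M < n" "vertex i = X ! (i mod M)"
proof -
  have "i < n \<or> i = M" using assms snd_vertex_less_iff by blast
  then show "i mod M < n" "vertex i = X ! (i mod M)"
    using n_less_M vertex_M n_ge by (auto simp: vertex_def)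
qed

lemma vertex_inj: "inj_on vertex {1..M}"
proof (rule inj_onI)
  fix i j assume "i \<in> {1..M}" "j \<in> {1..M}" and eq: "vertex i = vertex j"
  then have i: "1 \<le> i" "i \<le> M" and j: "1 \<le> j" "j \<le> M" by auto
  show "i = j"
  proof (cases "snd (vertex i) < int n")
    case True
    then have "snd (vertex j) < int n" using eq by simp
    then have "X ! (i mod M) = X ! (j mod M)" "i mod M < n" "j mod M < n"
      using vertex_low i(2) j(2) True eq by simp_all
    then have "i mod M = j mod M"
      using X_dipath length_X by (simp add: dipath_def nth_eq_iff_index_eq)
    then show "i = j" using i j by (auto simp: le_less)
  next
    case False
    then have "\<not> snd (vertex j) < int n" using eq by simp
    then have high: "n \<le> i" "i < M" "n \<le> j" "j < M"
      using False snd_vertex_less_iff[OF i(2)] snd_vertex_less_iff[OF j(2)] i(2) j(2) by auto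
    then have "int ((i - n) div 12) = int ((j - n) div 12)"
      using vertex_high_decode(1) eq by metis
    moreover have "(i - n) mod 12 = (j - n) mod 12"
      using vertex_high_decode(2)[OF high(1,2)] vertex_high_decode(2)[OF high(3,4)] eq
        P_dipath length_P by (simp add: dipath_def nth_eq_iff_index_eq)
    ultimately have "i - n = j - n" by (metis div_mult_mod_eq of_nat_eq_iff)
    then show "i = j" using high by simp
  qed
qed

lemma vertex_descent:
  assumes "i < M" shows "snd (vertex (Suc i)) < snd (vertex i) \<longleftrightarrow> Suc i = M"
proof
  assume desc: "snd (vertex (Suc i)) < snd (vertex i)"
  have gap: "m - 3 \<le> snd (vertex i) - snd (vertex (Suc i))"
    using arc_descent_wraps[OF vertex_arc[OF assms] desc] .
  show "Suc i = M"
  proof (rule ccontr)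
    assume "Suc i \<noteq> M"
    then have "Suc i < M" using assms by simp
    show False
    proof (cases "i < n")
      case True
      then have "snd (vertex i) < int n" using X_low by (simp add: vertex_def)
      moreover have "0 \<le> snd (vertex (Suc i))" using vertex_in_verts by (simp add: verts_def)
      ultimately show False using gap m_eq k_pos by linarith
    next
      case False
      have "(i - n) div 12 \<le> (Suc i - n) div 12" by (simp add: div_le_mono)
      then show False
        using gap vertex_high(3)[of i] vertex_high(2)[of "Suc i"] False \<open>Suc i < M\<close> m_eq k_pos n_ge
        by (simp add: not_less)
    qed
  qed
next
  assume "Suc i = M"
  then show "snd (vertex (Suc i)) < snd (vertex i)"
    using snd_vertex_less_iff[of M] snd_vertex_less_iff[of i] n_less_M by simp
qed

lemma tl_rho_pow_block:
  "tl (rho_pow m (12 * int j) P) = map vertex [n + 12 * j + 1..<n + 12 * j + 13]"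
proof (rule nth_equalityI)
  fix r assume "r < length (tl (rho_pow m (12 * int j) P))"
  then have r: "r < 12" using length_P by simp
  then have "(12 * j + r) div 12 = j" "(12 * j + r) mod 12 = r" by simp_all
  then have "vertex (Suc (n + 12 * j + r)) = rhov m (12 * int j) (P ! Suc r)"
    using vertex_Suc_high[of "n + 12 * j + r"] by simp
  then show "tl (rho_pow m (12 * int j) P) ! r = map vertex [n + 12 * j + 1..<n + 12 * j + 13] ! r"
    using r length_P by (simp add: nth_tl nth_rho_pow)
qed (simp add: length_P)

lemma chain_prefix_eq:
  "X @ concat (map (\<lambda>j. tl (rho_pow m (12 * int j) P)) [0..<N]) = map vertex [0..<n + 12 * N + 1]"
proof (induction N)
  case 0
  have "X ! i = vertex i" if "i \<le> n" for i
    using that vertex_n by (cases "i = n") (simp_all add: vertex_def)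
  then show ?case
    using length_X by (intro nth_equalityI) (simp_all del: upt_Suc)
next
  case (Suc N)
  have "[0..<n + 12 * Suc N + 1] = [0..<n + 12 * N + 1] @ [n + 12 * N + 1..<n + 12 * N + 13]"
    using upt_add_eq_append[of 0 "n + 12 * N + 1" 12] by (simp add: add_ac)
  moreover have "[0..<Suc N] = [0..<N] @ [N]" by simp
  ultimately show ?case using Suc.IH tl_rho_pow_block[of N] by (simp del: upt_Suc)
qed

lemma chain_eq: "rho_chain m k X P = map vertex [0..<M + 1]"
  using chain_prefix_eq[of k] by (simp add: foldl_cat M_def o_def)

theorem chain_type1: "type_cycle m 1 (rho_chain m k X P)"
proof -
  have "vertex 0 = vertex M" using vertex_M n_ge by (simp add: vertex_def)
  then have "dcycle m (map vertex [0..<M + 1])"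
    using int_M vertex_inj vertex_in_verts vertex_arc by (intro dcycle_map_upt)
  then show ?thesis
    unfolding chain_eq using n_less_M vertex_descent by (intro type1_map_upt) simp_all
qed

lemma chain_vertex_origin:
  assumes "v \<in> set (rho_chain m k X P)"
  shows "snd v < int n \<Longrightarrow> v \<in> set X" and "int n \<le> snd v \<Longrightarrow> to_block1 (int n) v \<in> set P"
proof -
  have "v \<in> vertex ` {0..<M + 1}"
    using assms unfolding chain_eq by (simp only: set_map set_upt)
  then obtain i where "i < M + 1" "v = vertex i" by auto
  then have i: "i \<le> M" "v = vertex i" by simp_all
  show "v \<in> set X" if "snd v < int n"
    using vertex_low[OF i(1)] that i length_X by simp
  show "to_block1 (int n) v \<in> set P" if "int n \<le> snd v"
  proof -
    have "n \<le> i" "i < M" using that i snd_vertex_less_iff[OF i(1)] by auto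
    then show ?thesis
      using vertex_high_decode(2) i(2) length_P by simp
  qed
qed

end

lemma basic_chain_intro:
  assumes p: "3 \<le> p" and m: "m = p + 12 * int k" and k: "1 \<le> k"
    and X: "dipath m X" "hd X = rhov m (- p) (last X)" "int (len X) = p"
      "set (butlast X) \<subseteq> Vblock m p 0" "snd (last X) \<in> {p mod m, (p + 1) mod m, (p + 2) mod m}"
    and P: "dipath m P" "len P = 12" "last X = hd P" "last P = rhov m 12 (hd P)"
      "set (butlast (tl P)) \<subseteq> Vblock m p 1"
  shows "basic_chain m (nat p) k X P"
proof -
  have "X \<noteq> []" "P \<noteq> []" using X(1) P(1) by (simp_all add: dipath_def)
  then have len: "length X = nat p + 1" "length P = 13"
    using X(3) P(2) p by (simp_all add: len_def)
  have "p mod m = p" "(p + 1) mod m = p + 1" "(p + 2) mod m = p + 2"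
    using p m k by (simp_all add: mod_pos_pos_trivial)
  then have last_X: "p \<le> snd (last X)" "snd (last X) \<le> p + 2" using X(5) by auto
  show ?thesis
  proof
    show "1 \<le> k" "dipath m X" "length X = nat p + 1" "last X = hd P" "dipath m P" "length P = 13"
      "last P = rhov m 12 (hd P)" by (fact k X(1) len P(3) P(1) len P(4))+
    show "3 \<le> nat p" "m = int (nat p) + 12 * int k" "hd X = rhov m (- int (nat p)) (last X)"
      using p m X(2) by simp_all
    show "snd (X ! i) < int (nat p)" if "i < nat p" for i
    proof -
      have "i < length (butlast X)" "butlast X ! i = X ! i"
        using that len by (simp_all add: nth_butlast)
      then have "X ! i \<in> set (butlast X)" by (metis nth_mem)
      then show ?thesis using X(4) p by (auto simp: Vblock_def)
    qed
    show "int (nat p) \<le> snd (P ! r) \<and> snd (P ! r) \<le> int (nat p) + 11" if "r \<le> 11" for r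
    proof (cases "r = 0")
      case True
      then show ?thesis using last_X P(3) p \<open>P \<noteq> []\<close> by (simp add: hd_conv_nth)
    next
      case False
      then have "r - 1 < length (butlast (tl P))" "butlast (tl P) ! (r - 1) = P ! r"
        using that len by (simp_all add: nth_butlast nth_tl)
      then have "P ! r \<in> set (butlast (tl P))" by (metis nth_mem)
      then show ?thesis using P(5) p by (auto simp: Vblock_def)
    qed
  qed
qed

lemma rho_chains_disjoint:
  assumes "basic_chain m n k X P" "basic_chain m n k Y Q"
    and "set X \<inter> set Y = {}" "set P \<inter> set Q = {}"
  shows "set (rho_chain m k X P) \<inter> set (rho_chain m k Y Q) = {}"
  using basic_chain.chain_vertex_origin[OF assms(1)] basic_chain.chain_vertex_origin[OF assms(2)]
    assms(3,4) by (meson disjoint_iff not_le)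

theorem mainTheorem6:
  fixes m p :: int and k :: nat and X Y P0 Q0 :: "vtx list"
  assumes "p \<in> {11, 13, 17, 19}"
    and "m = p + 12 * int k"
    and "type1_basic_set m p k X Y P0 Q0"
  shows "type_cycle m 1 (foldl cat X (map (\<lambda>j. rho_pow m (12 * int j) P0) [0..<k]))
       \<and> type_cycle m 1 (foldl cat Y (map (\<lambda>j. rho_pow m (12 * int j) Q0) [0..<k]))
       \<and> Cm_factor m [foldl cat X (map (\<lambda>j. rho_pow m (12 * int j) P0) [0..<k]),
                     foldl cat Y (map (\<lambda>j. rho_pow m (12 * int j) Q0) [0..<k])]"
proof -
  note basic = assms(3)[unfolded type1_basic_set_def]
  have p: "3 \<le> p" and m_pos: "0 < m" using assms(1,2) by auto
  show ?thesis
  proof (cases "k = 0")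
    case True
    then show ?thesis using basic Cm_factor_pair[OF _ _ _ m_pos] by (simp add: type_cycle_def)
  next
    case False
    then have k: "1 \<le> k" by simp
    have chains: "basic_chain m (nat p) k X P0" "basic_chain m (nat p) k Y Q0"
      by (rule basic_chain_intro[OF p assms(2) k]; use basic k in blast)+
    have "type_cycle m 1 (rho_chain m k X P0)" "type_cycle m 1 (rho_chain m k Y Q0)"
      using chains by (simp_all add: basic_chain.chain_type1)
    moreover have "set (rho_chain m k X P0) \<inter> set (rho_chain m k Y Q0) = {}"
      using rho_chains_disjoint[OF chains] basic k by simp
    ultimately show ?thesis using Cm_factor_pair m_pos by (simp add: type_cycle_def)
  qed
qed

end
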